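(* Let $L>0$. Let $\Gamma_L$ be the loop of length $L$ with a distinguished point $v$ (made into a vertex of degree two), and let $\Gamma_I$ be the interval $[0,L]$ with distinguished vertex $m$ at its midpoint $L/2$ (made into a vertex of degree two; the endpoints are degree-one vertices with Neumann condition). Then the $M$-functions $M^{\Gamma_L}_v$ and $M^{\Gamma_I}_m$ coincide, although $\Gamma_L$ and $\Gamma_I$ are not isospectral. Consequently, for every $c>0$, if $\Gamma_c$ is an interval of length $c$ attached by one endpoint at $v$ (resp. at $m$), the graphs $\Gamma_L\cup\Gamma_c$ and $\Gamma_I\cup\Gamma_c$ have the same eigenfrequencies apart from those whose eigenfunctions vanish at the attachment vertex; for $L=4$ their secular equations are $\left(-1+e^{4ik}\right)F_c(k)$ and $\left(1+e^{4ik}\right)F_c(k)$ respectively with the common factor $F_c(k)=-e^{2ick}+3e^{2i(c+2)k}+e^{4ik}-3$.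
   Context: Titchmarsh–Weil $M$-function: for a compact metric graph $\Gamma$ with a distinguished boundary vertex $v$ (all other vertices interior), and $k$ outside a discrete set, let $u$ satisfy $-u''=k^2u$ on each edge, be continuous at every vertex, satisfy the Kirchhoff condition (vanishing sum of outward normal derivatives) at every interior vertex, and have $u(v)\ne0$. Then $M^\Gamma_v(k)$ is defined by $M^\Gamma_v(k)u(v)=u'(v)$, where $u'(v)$ is the sum of outward normal derivatives of $u$ at $v$. Standard (Neumann–Kirchhoff) vertex conditions are used throughout. *)

theory Defs
  imports "HOL-Analysis.Analysis"
begin

text \<open>Compact metric graphs: a finite set of edges, each edge e identified with the
interval [0, len e], starting at vertex src e (coordinate 0) and ending at vertex
tgt e (coordinate len e).  Loops (src e = tgt e) are allowed.\<close>

record mgraph =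
  edges :: "nat set"
  len   :: "nat \<Rightarrow> real"
  src   :: "nat \<Rightarrow> nat"
  tgt   :: "nat \<Rightarrow> nat"

definition wf_graph :: "mgraph \<Rightarrow> bool" where
  "wf_graph G \<longleftrightarrow> finite (edges G) \<and> edges G \<noteq> {} \<and> (\<forall>e\<in>edges G. len G e > 0)"

definition vertices :: "mgraph \<Rightarrow> nat set" where
  "vertices G = src G ` edges G \<union> tgt G ` edges G"

text \<open>A function on the graph: one complex-valued function per edge (only its values
on [0, len e] matter).\<close>
type_synonym gfun = "nat \<Rightarrow> real \<Rightarrow> complex"

definition edge_deriv :: "real \<Rightarrow> (real \<Rightarrow> complex) \<Rightarrow> real \<Rightarrow> complex" where
  "edge_deriv l f x = vector_derivative f (at x within {0..l})"

definition edge_eq :: "real \<Rightarrow> complex \<Rightarrow> (real \<Rightarrow> complex) \<Rightarrow> bool" where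
  "edge_eq l lam f \<longleftrightarrow>
     (\<forall>x\<in>{0..l}. (f has_vector_derivative edge_deriv l f x) (at x within {0..l}) \<and>
        (edge_deriv l f has_vector_derivative (- lam * f x)) (at x within {0..l}))"

definition ends :: "mgraph \<Rightarrow> nat \<Rightarrow> (nat \<times> bool) set" where
  "ends G v = {(e, False) | e. e \<in> edges G \<and> src G e = v}
             \<union> {(e, True) | e. e \<in> edges G \<and> tgt G e = v}"

definition end_val :: "mgraph \<Rightarrow> gfun \<Rightarrow> nat \<times> bool \<Rightarrow> complex" where
  "end_val G u p = (if snd p then u (fst p) (len G (fst p)) else u (fst p) 0)"

text \<open>Normal derivative at an edge end, taken in the direction pointing away from the
vertex into the edge.\<close>
definition end_der :: "mgraph \<Rightarrow> gfun \<Rightarrow> nat \<times> bool \<Rightarrow> complex" where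
  "end_der G u p = (if snd p then - edge_deriv (len G (fst p)) (u (fst p)) (len G (fst p))
                    else edge_deriv (len G (fst p)) (u (fst p)) 0)"

definition cont_at :: "mgraph \<Rightarrow> gfun \<Rightarrow> nat \<Rightarrow> bool" where
  "cont_at G u v \<longleftrightarrow> (\<forall>p\<in>ends G v. \<forall>q\<in>ends G v. end_val G u p = end_val G u q)"

text \<open>Value u(v) at a vertex (meaningful when u is continuous at v).\<close>
definition vval :: "mgraph \<Rightarrow> gfun \<Rightarrow> nat \<Rightarrow> complex" where
  "vval G u v = end_val G u (SOME p. p \<in> ends G v)"

definition flux :: "mgraph \<Rightarrow> gfun \<Rightarrow> nat \<Rightarrow> complex" where
  "flux G u v = (\<Sum>p\<in>ends G v. end_der G u p)"

definition gsol :: "mgraph \<Rightarrow> complex \<Rightarrow> nat set \<Rightarrow> gfun \<Rightarrow> bool" where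
  "gsol G lam B u \<longleftrightarrow> (\<forall>e\<in>edges G. edge_eq (len G e) lam (u e))
      \<and> (\<forall>v\<in>vertices G. cont_at G u v)
      \<and> (\<forall>v\<in>vertices G - B. flux G u v = 0)"

definition M_rel :: "mgraph \<Rightarrow> nat \<Rightarrow> complex \<Rightarrow> complex \<Rightarrow> bool" where
  "M_rel G v k m \<longleftrightarrow> (\<exists>u. gsol G (k\<^sup>2) {v} u \<and> vval G u v \<noteq> 0 \<and> flux G u v = m * vval G u v)"

definition M_defined :: "mgraph \<Rightarrow> nat \<Rightarrow> complex \<Rightarrow> bool" where
  "M_defined G v k \<longleftrightarrow> (\<exists>!m. M_rel G v k m)"

definition M_fun :: "mgraph \<Rightarrow> nat \<Rightarrow> complex \<Rightarrow> complex" where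
  "M_fun G v k = (THE m. M_rel G v k m)"

definition nonzero_on :: "mgraph \<Rightarrow> gfun \<Rightarrow> bool" where
  "nonzero_on G u \<longleftrightarrow> (\<exists>e\<in>edges G. \<exists>x\<in>{0..len G e}. u e x \<noteq> 0)"

definition eigenfun :: "mgraph \<Rightarrow> complex \<Rightarrow> gfun \<Rightarrow> bool" where
  "eigenfun G lam u \<longleftrightarrow> gsol G lam {} u \<and> nonzero_on G u"

definition is_eigenvalue :: "mgraph \<Rightarrow> complex \<Rightarrow> bool" where
  "is_eigenvalue G lam \<longleftrightarrow> (\<exists>u. eigenfun G lam u)"

definition lin_indep_on :: "mgraph \<Rightarrow> nat \<Rightarrow> (nat \<Rightarrow> gfun) \<Rightarrow> bool" where
  "lin_indep_on G n us \<longleftrightarrow>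
     (\<forall>c::nat \<Rightarrow> complex. (\<forall>e\<in>edges G. \<forall>x\<in>{0..len G e}. (\<Sum>i<n. c i * us i e x) = 0)
        \<longrightarrow> (\<forall>i<n. c i = 0))"

definition multiplicity :: "mgraph \<Rightarrow> complex \<Rightarrow> enat" where
  "multiplicity G lam = Sup {enat n | n. \<exists>us. (\<forall>i<n. gsol G lam {} (us i)) \<and> lin_indep_on G n us}"

definition isospectral :: "mgraph \<Rightarrow> mgraph \<Rightarrow> bool" where
  "isospectral G H \<longleftrightarrow> (\<forall>lam. multiplicity G lam = multiplicity H lam)"

definition loop_graph :: "real \<Rightarrow> mgraph" where
  "loop_graph L = \<lparr>edges = {0}, len = (\<lambda>_. L), src = (\<lambda>_. 0), tgt = (\<lambda>_. 0)\<rparr>"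

text \<open>Interval [0,L] with a vertex 0 at its midpoint L/2: edge 0 is [0,L/2] running
from endpoint vertex 1 to the midpoint, edge 1 is [L/2,L] running from the midpoint to
the endpoint vertex 2.\<close>
definition interval_graph :: "real \<Rightarrow> mgraph" where
  "interval_graph L = \<lparr>edges = {0, 1}, len = (\<lambda>_. L / 2),
     src = (\<lambda>e. if e = 0 then 1 else 0), tgt = (\<lambda>e. if e = 0 then 0 else 2)\<rparr>"

definition attach_pendant :: "mgraph \<Rightarrow> nat \<Rightarrow> real \<Rightarrow> mgraph" where
  "attach_pendant G w c =
     (let ne = Suc (Max (edges G)); nv = Suc (Max (vertices G)) in
      G\<lparr>edges := insert ne (edges G), len := (len G)(ne := c),
        src := (src G)(ne := w), tgt := (tgt G)(ne := nv)\<rparr>)"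

definition F_sec :: "real \<Rightarrow> complex \<Rightarrow> complex" where
  "F_sec c k = - exp (2 * \<i> * c * k) + 3 * exp (2 * \<i> * (c + 2) * k) + exp (4 * \<i> * k) - 3"

end

theory Submission
  imports Defs "HOL-Complex_Analysis.Conformal_Mappings"
begin

(* On an edge, every solution of -u'' = k^2 u is u(0) cos kx + u'(0) sin(kx)/k, so all vertex
   conditions become linear algebra in the Cauchy data of the edges.  For the loop and for the
   interval alike, the pairs (u(v), u'(v)) of solutions that satisfy the conditions at the other
   vertices form the same line cos(kL/2) u'(v) = 2k sin(kL/2) u(v).  The M-functions are read off
   this line, and a pendant edge attached at v interacts with the rest of the graph only through
   (u(v), u'(v)), so the eigenfunctions not vanishing at v correspond.  At k = pi/L, where
   cos(kL/2) = 0, the interval carries an eigenfunction with u(v) = u'(v) = 0 which the loop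
   lacks, so the graphs are not isospectral.  For L = 4 the secular equations are the
   determinants of the resulting 3 x 3 systems. *)

section \<open>Solutions of the edge equation\<close>

definition cosk :: "complex \<Rightarrow> real \<Rightarrow> complex" where
  "cosk k x = cos (k * of_real x)"

definition sink :: "complex \<Rightarrow> real \<Rightarrow> complex" where
  "sink k x = (if k = 0 then of_real x else sin (k * of_real x) / k)"

lemma cosk_0 [simp]: "cosk k 0 = 1" and sink_0 [simp]: "sink k 0 = 0"
  by (simp_all add: cosk_def sink_def)

lemma has_vector_derivative_cosk: "(cosk k has_vector_derivative - k\<^sup>2 * sink k x) (at x within A)"
proof (cases "k = 0")
  case False
  have "((\<lambda>z. cos (k * z)) has_field_derivative - sin (k * of_real x) * k) (at (of_real x))"
    by (auto intro!: derivative_eq_intros)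
  from has_vector_derivative_real_field[OF this] False show ?thesis
    unfolding cosk_def[abs_def] sink_def by (simp add: power2_eq_square mult.commute)
qed (simp add: cosk_def[abs_def] sink_def)

lemma has_vector_derivative_sink: "(sink k has_vector_derivative cosk k x) (at x within A)"
proof (cases "k = 0")
  case True
  have "(complex_of_real has_vector_derivative 1) (at x within A)"
    using has_vector_derivative_of_real[of "\<lambda>x. x" 1] by (auto intro!: derivative_eq_intros)
  with True show ?thesis by (simp add: cosk_def sink_def[abs_def])
next
  case False
  have "((\<lambda>z. sin (k * z) / k) has_field_derivative cos (k * of_real x)) (at (of_real x))"
    using False by (auto intro!: derivative_eq_intros)
  from has_vector_derivative_real_field[OF this] False show ?thesis
    unfolding cosk_def sink_def[abs_def] by simp
qed

lemma cosk_sink_pythagoras: "(cosk k x)\<^sup>2 + k\<^sup>2 * (sink k x)\<^sup>2 = 1"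
  by (cases "k = 0") (simp_all add: cosk_def sink_def power_divide)

lemma cosk_double: "cosk k (2 * x) = (cosk k x)\<^sup>2 - k\<^sup>2 * (sink k x)\<^sup>2"
proof -
  have e: "k * (2 * complex_of_real x) = 2 * (k * complex_of_real x)" by simp
  show ?thesis by (cases "k = 0") (simp_all add: cosk_def sink_def e power_divide cos_double)
qed

lemma sink_double: "sink k (2 * x) = 2 * sink k x * cosk k x"
proof -
  have e: "k * (2 * complex_of_real x) = 2 * (k * complex_of_real x)" by simp
  show ?thesis by (cases "k = 0") (simp_all add: cosk_def sink_def e sin_double)
qed

lemma cosk_sink_halves:
  "cosk k x = (cosk k (x / 2))\<^sup>2 - k\<^sup>2 * (sink k (x / 2))\<^sup>2"
  "sink k x = 2 * sink k (x / 2) * cosk k (x / 2)"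
  using cosk_double[of k "x / 2"] sink_double[of k "x / 2"] by simp_all

definition edge_sol :: "complex \<Rightarrow> complex \<Rightarrow> complex \<Rightarrow> real \<Rightarrow> complex" where
  "edge_sol k a b x = a * cosk k x + b * sink k x"

lemma edge_sol_0 [simp]: "edge_sol k a b 0 = a"
  by (simp add: edge_sol_def)

lemma has_vector_derivative_edge_sol:
  "(edge_sol k a b has_vector_derivative edge_sol k b (- k\<^sup>2 * a) x) (at x within A)"
proof -
  have "(edge_sol k a b has_vector_derivative a * (- k\<^sup>2 * sink k x) + b * cosk k x) (at x within A)"
    unfolding edge_sol_def
    by (intro has_vector_derivative_add has_vector_derivative_mult_right
        has_vector_derivative_cosk has_vector_derivative_sink)
  then show ?thesis by (simp add: edge_sol_def algebra_simps)
qed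

lemma edge_deriv_eqI:
  assumes "l > 0" "x \<in> {0..l}" "(f has_vector_derivative D) (at x within {0..l})"
  shows "edge_deriv l f x = D"
  unfolding edge_deriv_def using vector_derivative_within_closed_interval assms .

lemma edge_deriv_edge_sol:
  "l > 0 \<Longrightarrow> x \<in> {0..l} \<Longrightarrow> edge_deriv l (edge_sol k a b) x = edge_sol k b (- k\<^sup>2 * a) x"
  using edge_deriv_eqI has_vector_derivative_edge_sol by blast

lemma edge_eq_edge_sol:
  assumes "l > 0"
  shows "edge_eq l (k\<^sup>2) (edge_sol k a b)"
  unfolding edge_eq_def
proof
  fix x assume x: "x \<in> {0..l}"
  have "edge_sol k (- k\<^sup>2 * a) (- k\<^sup>2 * b) x = - k\<^sup>2 * edge_sol k a b x"
    by (simp add: edge_sol_def algebra_simps)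
  then have "(edge_sol k b (- k\<^sup>2 * a) has_vector_derivative - k\<^sup>2 * edge_sol k a b x) (at x within {0..l})"
    using has_vector_derivative_edge_sol by metis
  then have "(edge_deriv l (edge_sol k a b) has_vector_derivative - k\<^sup>2 * edge_sol k a b x) (at x within {0..l})"
    by (rule has_vector_derivative_transform_within[OF _ zero_less_one x])
      (simp add: edge_deriv_edge_sol assms)
  then show "(edge_sol k a b has_vector_derivative edge_deriv l (edge_sol k a b) x) (at x within {0..l}) \<and>
      (edge_deriv l (edge_sol k a b) has_vector_derivative - k\<^sup>2 * edge_sol k a b x) (at x within {0..l})"
    using has_vector_derivative_edge_sol edge_deriv_edge_sol[OF assms x] by simp
qed

lemma edge_eq_wronskian:
  assumes l: "l > 0" and f: "edge_eq l (k\<^sup>2) f" and x: "x \<in> {0..l}"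
  shows "f x * edge_sol k b (- k\<^sup>2 * a) x - edge_deriv l f x * edge_sol k a b x
       = f 0 * b - edge_deriv l f 0 * a"
proof -
  define W where "W y = f y * edge_sol k b (- k\<^sup>2 * a) y - edge_deriv l f y * edge_sol k a b y" for y
  have "(W has_vector_derivative 0) (at y within {0..l})" if "y \<in> {0..l}" for y
  proof -
    have "(W has_vector_derivative
        f y * edge_sol k (- k\<^sup>2 * a) (- k\<^sup>2 * b) y + edge_deriv l f y * edge_sol k b (- k\<^sup>2 * a) y
        - (edge_deriv l f y * edge_sol k b (- k\<^sup>2 * a) y + (- k\<^sup>2 * f y) * edge_sol k a b y))
        (at y within {0..l})"
      unfolding W_def using f that unfolding edge_eq_def
      by (intro has_vector_derivative_diff has_vector_derivative_mult has_vector_derivative_edge_sol) auto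
    then show ?thesis by (simp add: edge_sol_def algebra_simps)
  qed
  then obtain c where "\<And>y. y \<in> {0..l} \<Longrightarrow> W y = c"
    using has_vector_derivative_zero_constant[of "{0..l}" W] by auto
  then have "W x = W 0" using l x by simp
  then show ?thesis by (simp add: W_def)
qed

lemma edge_eq_imp_edge_sol:
  assumes l: "l > 0" and f: "edge_eq l (k\<^sup>2) f" and x: "x \<in> {0..l}"
  shows "f x = edge_sol k (f 0) (edge_deriv l f 0) x"
proof -
  have c: "f x * cosk k x - edge_deriv l f x * sink k x = f 0"
    using edge_eq_wronskian[OF assms, where a = 0 and b = 1] by (simp add: edge_sol_def)
  have s: "k\<^sup>2 * f x * sink k x + edge_deriv l f x * cosk k x = edge_deriv l f 0"
    using edge_eq_wronskian[OF assms, where a = 1 and b = 0] by (simp add: edge_sol_def algebra_simps)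
  have "f x = f x * ((cosk k x)\<^sup>2 + k\<^sup>2 * (sink k x)\<^sup>2)"
    by (simp add: cosk_sink_pythagoras)
  also have "\<dots> = cosk k x * (f x * cosk k x - edge_deriv l f x * sink k x)
                 + sink k x * (k\<^sup>2 * f x * sink k x + edge_deriv l f x * cosk k x)"
    by (simp add: algebra_simps power2_eq_square)
  also have "\<dots> = f 0 * cosk k x + edge_deriv l f 0 * sink k x"
    unfolding c s by (simp add: algebra_simps)
  finally show ?thesis by (simp add: edge_sol_def)
qed

lemma edge_sol_eq_0_iff:
  assumes l: "l > 0"
  shows "(\<forall>x\<in>{0..l}. edge_sol k a b x = 0) \<longleftrightarrow> a = 0 \<and> b = 0"
proof
  assume z: "\<forall>x\<in>{0..l}. edge_sol k a b x = 0"
  have x0: "0 \<in> {0..l}" using l by simp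
  have "(edge_sol k a b has_vector_derivative 0) (at 0 within {0..l})"
    by (rule has_vector_derivative_transform_within[OF has_vector_derivative_const zero_less_one x0])
      (use z in auto)
  then have "edge_deriv l (edge_sol k a b) 0 = 0" by (rule edge_deriv_eqI[OF l x0])
  then show "a = 0 \<and> b = 0" using bspec[OF z x0] edge_deriv_edge_sol[OF l x0, of k a b] by simp
qed (simp add: edge_sol_def)

section \<open>Solutions on a graph in terms of Cauchy data\<close>

definition graph_sol :: "complex \<Rightarrow> (nat \<Rightarrow> complex) \<Rightarrow> (nat \<Rightarrow> complex) \<Rightarrow> gfun" where
  "graph_sol k a b e = edge_sol k (a e) (b e)"

lemma fst_ends_in_edges: "p \<in> ends G v \<Longrightarrow> fst p \<in> edges G"
  by (auto simp: ends_def)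

lemma vertices_iff_ends_nonempty: "v \<in> vertices G \<longleftrightarrow> ends G v \<noteq> {}"
  by (auto simp: vertices_def ends_def)

lemma end_val_graph_sol:
  "end_val G (graph_sol k a b) (e, s) = (if s then edge_sol k (a e) (b e) (len G e) else a e)"
  by (simp add: end_val_def graph_sol_def)

lemma end_der_graph_sol:
  "len G e > 0 \<Longrightarrow> end_der G (graph_sol k a b) (e, s)
     = (if s then - edge_sol k (b e) (- k\<^sup>2 * a e) (len G e) else b e)"
  by (simp add: end_der_def graph_sol_def edge_deriv_edge_sol)

lemma gsol_graph_sol_iff:
  "wf_graph G \<Longrightarrow> gsol G (k\<^sup>2) B (graph_sol k a b) \<longleftrightarrow>
     (\<forall>v\<in>vertices G. cont_at G (graph_sol k a b) v) \<and>
     (\<forall>v\<in>vertices G - B. flux G (graph_sol k a b) v = 0)"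
  by (simp add: gsol_def wf_graph_def graph_sol_def[abs_def] edge_eq_edge_sol)

lemma nonzero_on_graph_sol:
  assumes "wf_graph G"
  shows "nonzero_on G (graph_sol k a b) \<longleftrightarrow> (\<exists>e\<in>edges G. a e \<noteq> 0 \<or> b e \<noteq> 0)"
proof -
  have "(\<exists>x\<in>{0..len G e}. edge_sol k (a e) (b e) x \<noteq> 0) \<longleftrightarrow> a e \<noteq> 0 \<or> b e \<noteq> 0"
    if "e \<in> edges G" for e
    using edge_sol_eq_0_iff[of "len G e" k "a e" "b e"] assms that unfolding wf_graph_def by blast
  then show ?thesis unfolding nonzero_on_def graph_sol_def by (rule bex_cong[OF refl])
qed

lemma vval_eq_end_val:
  assumes "cont_at G u v" "p \<in> ends G v"
  shows "vval G u v = end_val G u p"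
proof -
  have "(SOME q. q \<in> ends G v) \<in> ends G v" using assms(2) by (rule someI)
  with assms show ?thesis unfolding vval_def cont_at_def by blast
qed

lemma vval_gsol: "gsol G lam B u \<Longrightarrow> p \<in> ends G v \<Longrightarrow> vval G u v = end_val G u p"
proof (rule vval_eq_end_val)
  assume "gsol G lam B u" "p \<in> ends G v"
  then show "cont_at G u v" by (auto simp: gsol_def vertices_iff_ends_nonempty)
qed

lemma graph_sol_cauchy_data_eq:
  assumes G: "wf_graph G" and u: "\<forall>e\<in>edges G. edge_eq (len G e) (k\<^sup>2) (u e)"
    and e: "e \<in> edges G" and x: "x \<in> {0..len G e}"
  defines "w \<equiv> graph_sol k (\<lambda>e. u e 0) (\<lambda>e. edge_deriv (len G e) (u e) 0)"
  shows "w e x = u e x" and "edge_deriv (len G e) (w e) x = edge_deriv (len G e) (u e) x"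
proof -
  have l: "len G e > 0" using G e by (simp add: wf_graph_def)
  have eq: "edge_eq (len G e) (k\<^sup>2) (u e)" using u e by blast
  have val: "w e y = u e y" if "y \<in> {0..len G e}" for y
    using edge_eq_imp_edge_sol[OF l eq that] by (simp add: w_def graph_sol_def)
  then show "w e x = u e x" using x .
  show "edge_deriv (len G e) (w e) x = edge_deriv (len G e) (u e) x"
  proof (rule edge_deriv_eqI[OF l x])
    have "(u e has_vector_derivative edge_deriv (len G e) (u e) x) (at x within {0..len G e})"
      using eq x unfolding edge_eq_def by blast
    then show "(w e has_vector_derivative edge_deriv (len G e) (u e) x) (at x within {0..len G e})"
      by (rule has_vector_derivative_transform_within[OF _ zero_less_one x]) (simp add: val)
  qed
qed

lemma gsol_graph_sol_representative:
  assumes G: "wf_graph G" and u: "gsol G (k\<^sup>2) B u"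
  defines "w \<equiv> graph_sol k (\<lambda>e. u e 0) (\<lambda>e. edge_deriv (len G e) (u e) 0)"
  shows "gsol G (k\<^sup>2) B w"
    and "v \<in> vertices G \<Longrightarrow> vval G w v = vval G u v"
    and "flux G w = flux G u"
    and "nonzero_on G w \<longleftrightarrow> nonzero_on G u"
proof -
  note agree = graph_sol_cauchy_data_eq[OF G, of k u, folded w_def]
  have eqs: "\<forall>e\<in>edges G. edge_eq (len G e) (k\<^sup>2) (u e)" using u by (simp add: gsol_def)
  have ends: "end_val G w p = end_val G u p \<and> end_der G w p = end_der G u p"
    if "fst p \<in> edges G" for p
  proof -
    have "0 \<in> {0..len G (fst p)}" "len G (fst p) \<in> {0..len G (fst p)}"
      using G that by (auto simp: wf_graph_def less_imp_le)
    then show ?thesis using agree[OF eqs that] by (simp add: end_val_def end_der_def)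
  qed
  have cont: "cont_at G w v \<longleftrightarrow> cont_at G u v" for v
    unfolding cont_at_def using ends fst_ends_in_edges by simp
  show flux: "flux G w = flux G u"
    unfolding flux_def fun_eq_iff using ends fst_ends_in_edges by simp
  show "gsol G (k\<^sup>2) B w"
    using u unfolding w_def gsol_graph_sol_iff[OF G] unfolding w_def[symmetric] cont flux
    by (simp add: gsol_def)
  show "vval G w v = vval G u v" if v: "v \<in> vertices G"
  proof -
    obtain p where p: "p \<in> ends G v" using v unfolding vertices_iff_ends_nonempty by blast
    have "cont_at G u v" using u v by (simp add: gsol_def)
    then show ?thesis using p ends[OF fst_ends_in_edges[OF p]] by (simp add: vval_eq_end_val cont)
  qed
  show "nonzero_on G w \<longleftrightarrow> nonzero_on G u"
    using agree(1)[OF eqs] by (auto simp: nonzero_on_def)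
qed

(* The Cauchy data (u(v), u'(v)) of the solutions that satisfy the vertex conditions away from v.
   Both the M-function and the effect of gluing a pendant edge at v only depend on this set. *)
definition boundary_data :: "mgraph \<Rightarrow> nat \<Rightarrow> complex \<Rightarrow> (complex \<times> complex) set" where
  "boundary_data G v k = {(vval G u v, flux G u v) | u. gsol G (k\<^sup>2) {v} u}"

lemma mem_boundary_data_graph_sol:
  assumes G: "wf_graph G" and v: "v \<in> vertices G"
  shows "(p, f) \<in> boundary_data G v k \<longleftrightarrow> (\<exists>a b. gsol G (k\<^sup>2) {v} (graph_sol k a b) \<and>
     p = vval G (graph_sol k a b) v \<and> f = flux G (graph_sol k a b) v)"
proof
  assume "(p, f) \<in> boundary_data G v k"
  then obtain u where u: "gsol G (k\<^sup>2) {v} u" and "p = vval G u v" "f = flux G u v"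
    by (auto simp: boundary_data_def)
  with gsol_graph_sol_representative[OF G u] v
  show "\<exists>a b. gsol G (k\<^sup>2) {v} (graph_sol k a b) \<and>
     p = vval G (graph_sol k a b) v \<and> f = flux G (graph_sol k a b) v"
    by (intro exI[of _ "\<lambda>e. u e 0"] exI[of _ "\<lambda>e. edge_deriv (len G e) (u e) 0"]) simp
qed (auto simp: boundary_data_def)

lemma M_rel_iff_boundary_data:
  "M_rel G v k m \<longleftrightarrow> (\<exists>p. p \<noteq> 0 \<and> (p, m * p) \<in> boundary_data G v k)"
proof
  assume "M_rel G v k m"
  then obtain u where "gsol G (k\<^sup>2) {v} u" "vval G u v \<noteq> 0" "flux G u v = m * vval G u v"
    by (auto simp: M_rel_def)
  then show "\<exists>p. p \<noteq> 0 \<and> (p, m * p) \<in> boundary_data G v k"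
    unfolding boundary_data_def by (intro exI[of _ "vval G u v"]) auto
qed (auto simp: M_rel_def boundary_data_def)

lemma is_eigenvalue_graph_sol:
  assumes G: "wf_graph G"
  shows "is_eigenvalue G (k\<^sup>2) \<longleftrightarrow>
     (\<exists>a b. gsol G (k\<^sup>2) {} (graph_sol k a b) \<and> (\<exists>e\<in>edges G. a e \<noteq> 0 \<or> b e \<noteq> 0))"
proof
  assume "is_eigenvalue G (k\<^sup>2)"
  then obtain u where u: "gsol G (k\<^sup>2) {} u" and nz: "nonzero_on G u"
    by (auto simp: is_eigenvalue_def eigenfun_def)
  define a where "a e = u e 0" for e
  define b where "b e = edge_deriv (len G e) (u e) 0" for e
  have "gsol G (k\<^sup>2) {} (graph_sol k a b) \<and> nonzero_on G (graph_sol k a b)"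
    using gsol_graph_sol_representative[OF G u] nz unfolding a_def[abs_def] b_def[abs_def] by simp
  then show "\<exists>a b. gsol G (k\<^sup>2) {} (graph_sol k a b) \<and> (\<exists>e\<in>edges G. a e \<noteq> 0 \<or> b e \<noteq> 0)"
    unfolding nonzero_on_graph_sol[OF G] by blast
next
  assume "\<exists>a b. gsol G (k\<^sup>2) {} (graph_sol k a b) \<and> (\<exists>e\<in>edges G. a e \<noteq> 0 \<or> b e \<noteq> 0)"
  then obtain a b where "gsol G (k\<^sup>2) {} (graph_sol k a b)" "nonzero_on G (graph_sol k a b)"
    unfolding nonzero_on_graph_sol[OF G] by blast
  then show "is_eigenvalue G (k\<^sup>2)"
    unfolding is_eigenvalue_def eigenfun_def by blast
qed

lemma ex_eigenfun_graph_sol: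
  assumes G: "wf_graph G" and v: "v \<in> vertices G"
  shows "(\<exists>u. eigenfun G (k\<^sup>2) u \<and> vval G u v \<noteq> 0) \<longleftrightarrow>
    (\<exists>a b. gsol G (k\<^sup>2) {} (graph_sol k a b) \<and> vval G (graph_sol k a b) v \<noteq> 0)"
proof
  assume "\<exists>u. eigenfun G (k\<^sup>2) u \<and> vval G u v \<noteq> 0"
  then obtain u where u: "gsol G (k\<^sup>2) {} u" and "vval G u v \<noteq> 0"
    by (auto simp: eigenfun_def)
  with gsol_graph_sol_representative[OF G u] v show
    "\<exists>a b. gsol G (k\<^sup>2) {} (graph_sol k a b) \<and> vval G (graph_sol k a b) v \<noteq> 0"
    by (intro exI[of _ "\<lambda>e. u e 0"] exI[of _ "\<lambda>e. edge_deriv (len G e) (u e) 0"]) simp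
next
  assume "\<exists>a b. gsol G (k\<^sup>2) {} (graph_sol k a b) \<and> vval G (graph_sol k a b) v \<noteq> 0"
  then obtain a b where sol: "gsol G (k\<^sup>2) {} (graph_sol k a b)"
    and nz: "vval G (graph_sol k a b) v \<noteq> 0"
    by blast
  obtain p where p: "p \<in> ends G v" using v unfolding vertices_iff_ends_nonempty by blast
  then have e: "fst p \<in> edges G" by (rule fst_ends_in_edges)
  then have "len G (fst p) > 0" using G by (simp add: wf_graph_def)
  moreover have "end_val G (graph_sol k a b) p \<noteq> 0" using nz vval_gsol[OF sol p] by simp
  ultimately have "\<exists>x\<in>{0..len G (fst p)}. graph_sol k a b (fst p) x \<noteq> 0"
    unfolding end_val_def by (cases "snd p") auto
  with e have "nonzero_on G (graph_sol k a b)"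
    unfolding nonzero_on_def by blast
  with sol nz show "\<exists>u. eigenfun G (k\<^sup>2) u \<and> vval G u v \<noteq> 0"
    unfolding eigenfun_def by blast
qed

lemma Sup_enat_eq_0_iff: "Sup {enat n | n. P n} = 0 \<longleftrightarrow> (\<forall>n. P n \<longrightarrow> n = 0)"
proof -
  have "(\<forall>x\<in>{enat n | n. P n}. x = 0) \<longleftrightarrow> (\<forall>n. P n \<longrightarrow> n = 0)"
  proof
    assume H: "\<forall>x\<in>{enat n | n. P n}. x = 0"
    show "\<forall>n. P n \<longrightarrow> n = 0"
    proof (intro allI impI)
      fix n assume "P n"
      then have "enat n = 0" using H by blast
      then show "n = 0" by (simp add: enat_0_iff)
    qed
  qed (auto simp: enat_0_iff)
  then show ?thesis by (simp only: Sup_bot_conv(1)[where 'a = enat, unfolded bot_enat_def])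
qed

lemma ex_lin_indep_gsol_iff_is_eigenvalue:
  "(\<exists>n us. n > 0 \<and> (\<forall>i<n. gsol G lam {} (us i)) \<and> lin_indep_on G n us) \<longleftrightarrow> is_eigenvalue G lam"
proof
  assume "\<exists>n us. n > 0 \<and> (\<forall>i<n. gsol G lam {} (us i)) \<and> lin_indep_on G n us"
  then obtain n us where n: "n > 0" and sol: "\<forall>i<n. gsol G lam {} (us i)"
    and indep: "lin_indep_on G n us" by blast
  define c :: "nat \<Rightarrow> complex" where "c i = (if i = 0 then 1 else 0)" for i
  have "(\<Sum>i<n. c i * us i e x) = (\<Sum>i<n. if i = 0 then us i e x else 0)" for e x
    by (rule sum.cong) (simp_all add: c_def)
  then have "(\<Sum>i<n. c i * us i e x) = us 0 e x" for e x
    using n by simp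
  then have "nonzero_on G (us 0)"
    using indep n unfolding lin_indep_on_def nonzero_on_def by (metis c_def one_neq_zero)
  then show "is_eigenvalue G lam"
    using sol n by (auto simp: is_eigenvalue_def eigenfun_def)
next
  assume "is_eigenvalue G lam"
  then obtain u where sol: "gsol G lam {} u" and "nonzero_on G u"
    by (auto simp: is_eigenvalue_def eigenfun_def)
  then obtain e x where "e \<in> edges G" "x \<in> {0..len G e}" "u e x \<noteq> 0"
    by (auto simp: nonzero_on_def)
  then have "lin_indep_on G 1 (\<lambda>_. u)"
    by (auto simp: lin_indep_on_def)
  with sol show "\<exists>n us. n > 0 \<and> (\<forall>i<n. gsol G lam {} (us i)) \<and> lin_indep_on G n us"
    by (intro exI[of _ 1] exI[of _ "\<lambda>_. u"]) auto
qed

lemma multiplicity_eq_0_iff: "multiplicity G lam = 0 \<longleftrightarrow> \<not> is_eigenvalue G lam"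
  unfolding multiplicity_def Sup_enat_eq_0_iff ex_lin_indep_gsol_iff_is_eigenvalue[symmetric] by auto

lemma ball_Diff_iff: "(\<forall>x\<in>A - B. P x) \<longleftrightarrow> (\<forall>x\<in>A. x \<notin> B \<longrightarrow> P x)"
  by blast

lemma cont_at_ends_1: "ends G v = {p} \<Longrightarrow> cont_at G u v"
  by (simp add: cont_at_def)

lemma cont_at_ends_2: "ends G v = {p, q} \<Longrightarrow> cont_at G u v \<longleftrightarrow> end_val G u p = end_val G u q"
  by (auto simp: cont_at_def)

lemma cont_at_ends_3:
  "ends G v = {p, q, r} \<Longrightarrow>
     cont_at G u v \<longleftrightarrow> end_val G u p = end_val G u q \<and> end_val G u r = end_val G u q"
  by (auto simp: cont_at_def)

lemma flux_ends_1: "ends G v = {p} \<Longrightarrow> flux G u v = end_der G u p"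
  by (simp add: flux_def)

lemma flux_ends_2: "ends G v = {p, q} \<Longrightarrow> p \<noteq> q \<Longrightarrow> flux G u v = end_der G u p + end_der G u q"
  by (simp add: flux_def)

lemma flux_ends_3:
  "ends G v = {p, q, r} \<Longrightarrow> p \<noteq> q \<Longrightarrow> p \<noteq> r \<Longrightarrow> q \<noteq> r \<Longrightarrow>
     flux G u v = end_der G u p + end_der G u q + end_der G u r"
  by (simp add: flux_def add.assoc)

section \<open>The four graphs\<close>

lemma loop_graph_simps [simp]:
  "edges (loop_graph L) = {0}" "len (loop_graph L) = (\<lambda>_. L)"
  "src (loop_graph L) = (\<lambda>_. 0)" "tgt (loop_graph L) = (\<lambda>_. 0)"
  by (simp_all add: loop_graph_def)

lemma interval_graph_simps [simp]:
  "edges (interval_graph L) = {0, 1}" "len (interval_graph L) = (\<lambda>_. L / 2)"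
  "src (interval_graph L) = (\<lambda>e. if e = 0 then 1 else 0)"
  "tgt (interval_graph L) = (\<lambda>e. if e = 0 then 0 else 2)"
  by (simp_all add: interval_graph_def)

lemma vertices_loop_graph [simp]: "vertices (loop_graph L) = {0}"
  by (auto simp: vertices_def)

lemma vertices_interval_graph [simp]: "vertices (interval_graph L) = {0, 1, 2}"
  by (auto simp: vertices_def)

lemma attach_pendant_loop_graph_simps [simp]:
  "edges (attach_pendant (loop_graph L) 0 c) = {0, 1}"
  "len (attach_pendant (loop_graph L) 0 c) = (\<lambda>e. if e = 1 then c else L)"
  "src (attach_pendant (loop_graph L) 0 c) = (\<lambda>_. 0)"
  "tgt (attach_pendant (loop_graph L) 0 c) = (\<lambda>e. if e = 1 then 1 else 0)"
  by (auto simp: attach_pendant_def Let_def loop_graph_def vertices_def)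

lemma attach_pendant_interval_graph_simps [simp]:
  "edges (attach_pendant (interval_graph L) 0 c) = {0, 1, 2}"
  "len (attach_pendant (interval_graph L) 0 c) = (\<lambda>e. if e = 2 then c else L / 2)"
  "src (attach_pendant (interval_graph L) 0 c) = (\<lambda>e. if e = 0 then 1 else 0)"
  "tgt (attach_pendant (interval_graph L) 0 c) = (\<lambda>e. if e = 0 then 0 else if e = 2 then 3 else 2)"
proof -
  have "Max (edges (interval_graph L)) = 1" "Max (vertices (interval_graph L)) = 2" by simp_all
  then show
    "edges (attach_pendant (interval_graph L) 0 c) = {0, 1, 2}"
    "len (attach_pendant (interval_graph L) 0 c) = (\<lambda>e. if e = 2 then c else L / 2)"
    "src (attach_pendant (interval_graph L) 0 c) = (\<lambda>e. if e = 0 then 1 else 0)"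
    "tgt (attach_pendant (interval_graph L) 0 c) = (\<lambda>e. if e = 0 then 0 else if e = 2 then 3 else 2)"
    unfolding attach_pendant_def Let_def by (auto simp: interval_graph_def fun_eq_iff)
qed

lemma vertices_attach_pendant_loop_graph [simp]:
  "vertices (attach_pendant (loop_graph L) 0 c) = {0, 1}"
  by (auto simp: vertices_def)

lemma vertices_attach_pendant_interval_graph [simp]:
  "vertices (attach_pendant (interval_graph L) 0 c) = {0, 1, 2, 3}"
  unfolding vertices_def by (simp add: image_insert) auto

lemma vertex_0_attach_pendant: "0 \<in> vertices (attach_pendant G 0 c)"
  by (simp add: vertices_def attach_pendant_def Let_def)

lemma wf_graph_loop_graph: "L > 0 \<Longrightarrow> wf_graph (loop_graph L)"
  by (simp add: wf_graph_def)

lemma wf_graph_interval_graph: "L > 0 \<Longrightarrow> wf_graph (interval_graph L)"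
  by (simp add: wf_graph_def)

lemma wf_graph_attach_pendant_loop_graph:
  "L > 0 \<Longrightarrow> c > 0 \<Longrightarrow> wf_graph (attach_pendant (loop_graph L) 0 c)"
  by (simp add: wf_graph_def)

lemma wf_graph_attach_pendant_interval_graph:
  "L > 0 \<Longrightarrow> c > 0 \<Longrightarrow> wf_graph (attach_pendant (interval_graph L) 0 c)"
  by (simp add: wf_graph_def)

lemma ends_loop_graph: "ends (loop_graph L) 0 = {(0, False), (0, True)}"
  unfolding ends_def by (rule set_eqI, case_tac x) auto

lemma ends_interval_graph:
  "ends (interval_graph L) 0 = {(0, True), (1, False)}"
  "ends (interval_graph L) 1 = {(0, False)}"
  "ends (interval_graph L) 2 = {(1, True)}"
  unfolding ends_def by (rule set_eqI, case_tac x, auto simp: eq_commute[of 0])+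

lemma ends_attach_pendant_loop_graph:
  "ends (attach_pendant (loop_graph L) 0 c) 0 = {(0, False), (0, True), (1, False)}"
  "ends (attach_pendant (loop_graph L) 0 c) 1 = {(1, True)}"
  unfolding ends_def by (rule set_eqI, case_tac x, auto simp: eq_commute[of 0] eq_commute[of 1])+

lemma ends_attach_pendant_interval_graph:
  "ends (attach_pendant (interval_graph L) 0 c) 0 = {(0, True), (1, False), (2, False)}"
  "ends (attach_pendant (interval_graph L) 0 c) 1 = {(0, False)}"
  "ends (attach_pendant (interval_graph L) 0 c) 2 = {(1, True)}"
  "ends (attach_pendant (interval_graph L) 0 c) 3 = {(2, True)}"
  unfolding ends_def
    apply (rule set_eqI, case_tac x, auto simp: eq_commute[of 0])[1]
    apply (rule set_eqI, case_tac x, auto)[1]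
   apply (rule set_eqI, case_tac x, auto simp: eq_commute[of 2])[1]
  apply (rule set_eqI, case_tac x, auto simp: eq_commute[of 3])[1]
  done

lemma gsol_loop_graph_sol:
  assumes "L > 0"
  shows "gsol (loop_graph L) (k\<^sup>2) B (graph_sol k a b) \<longleftrightarrow>
    a 0 = edge_sol k (a 0) (b 0) L \<and> (0 \<notin> B \<longrightarrow> b 0 = edge_sol k (b 0) (- k\<^sup>2 * a 0) L)"
  using assms
  by (simp add: gsol_graph_sol_iff wf_graph_loop_graph cont_at_ends_2[OF ends_loop_graph]
      flux_ends_2[OF ends_loop_graph] end_val_graph_sol end_der_graph_sol ball_Diff_iff)

lemma flux_loop_graph_sol:
  "L > 0 \<Longrightarrow> flux (loop_graph L) (graph_sol k a b) 0 = b 0 - edge_sol k (b 0) (- k\<^sup>2 * a 0) L"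
  by (simp add: flux_ends_2[OF ends_loop_graph] end_der_graph_sol)

lemma vval_loop_graph: "gsol (loop_graph L) lam B u \<Longrightarrow> vval (loop_graph L) u 0 = u 0 0"
  by (simp add: vval_gsol[where p = "(0, False)"] ends_loop_graph end_val_def)

lemma gsol_interval_graph_sol:
  assumes "L > 0"
  shows "gsol (interval_graph L) (k\<^sup>2) B (graph_sol k a b) \<longleftrightarrow>
    edge_sol k (a 0) (b 0) (L / 2) = a 1 \<and>
    (0 \<notin> B \<longrightarrow> b 1 = edge_sol k (b 0) (- k\<^sup>2 * a 0) (L / 2)) \<and>
    (1 \<notin> B \<longrightarrow> b 0 = 0) \<and> (2 \<notin> B \<longrightarrow> edge_sol k (b 1) (- k\<^sup>2 * a 1) (L / 2) = 0)"
  using assms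
  by (simp add: gsol_graph_sol_iff wf_graph_interval_graph
      cont_at_ends_2[OF ends_interval_graph(1)] cont_at_ends_1[OF ends_interval_graph(3)]
      cont_at_ends_1[OF ends_interval_graph(2)[unfolded One_nat_def]]
      flux_ends_2[OF ends_interval_graph(1)] flux_ends_1[OF ends_interval_graph(3)]
      flux_ends_1[OF ends_interval_graph(2)[unfolded One_nat_def]]
      end_val_graph_sol end_der_graph_sol ball_Diff_iff)

lemma flux_interval_graph_sol:
  "L > 0 \<Longrightarrow> flux (interval_graph L) (graph_sol k a b) 0
     = b 1 - edge_sol k (b 0) (- k\<^sup>2 * a 0) (L / 2)"
  by (simp add: flux_ends_2[OF ends_interval_graph(1)] end_der_graph_sol)

lemma vval_interval_graph: "gsol (interval_graph L) lam B u \<Longrightarrow> vval (interval_graph L) u 0 = u 1 0"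
  by (simp add: vval_gsol[where p = "(1, False)"] ends_interval_graph end_val_def)

lemma gsol_attach_pendant_loop_graph_sol:
  assumes "L > 0" "c > 0"
  shows "gsol (attach_pendant (loop_graph L) 0 c) (k\<^sup>2) {} (graph_sol k a b) \<longleftrightarrow>
    a 0 = edge_sol k (a 0) (b 0) L \<and> a 1 = a 0 \<and>
    b 0 - edge_sol k (b 0) (- k\<^sup>2 * a 0) L + b 1 = 0 \<and> edge_sol k (b 1) (- k\<^sup>2 * a 1) c = 0"
  using assms
  by (simp add: gsol_graph_sol_iff wf_graph_attach_pendant_loop_graph
      cont_at_ends_3[OF ends_attach_pendant_loop_graph(1)]
      cont_at_ends_1[OF ends_attach_pendant_loop_graph(2)[unfolded One_nat_def]]
      flux_ends_3[OF ends_attach_pendant_loop_graph(1)]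
      flux_ends_1[OF ends_attach_pendant_loop_graph(2)[unfolded One_nat_def]]
      end_val_graph_sol end_der_graph_sol)
    auto

lemma vval_attach_pendant_loop_graph:
  "gsol (attach_pendant (loop_graph L) 0 c) lam B u \<Longrightarrow> vval (attach_pendant (loop_graph L) 0 c) u 0 = u 0 0"
  by (simp add: vval_gsol[where p = "(0, False)"] ends_attach_pendant_loop_graph end_val_def)

lemma gsol_attach_pendant_interval_graph_sol:
  assumes "L > 0" "c > 0"
  shows "gsol (attach_pendant (interval_graph L) 0 c) (k\<^sup>2) {} (graph_sol k a b) \<longleftrightarrow>
    edge_sol k (a 0) (b 0) (L / 2) = a 1 \<and> a 2 = a 1 \<and>
    b 1 + b 2 - edge_sol k (b 0) (- k\<^sup>2 * a 0) (L / 2) = 0 \<and> b 0 = 0 \<and>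
    edge_sol k (b 1) (- k\<^sup>2 * a 1) (L / 2) = 0 \<and> edge_sol k (b 2) (- k\<^sup>2 * a 2) c = 0"
  using assms
  by (simp add: gsol_graph_sol_iff wf_graph_attach_pendant_interval_graph
      cont_at_ends_3[OF ends_attach_pendant_interval_graph(1)]
      cont_at_ends_1[OF ends_attach_pendant_interval_graph(2)[unfolded One_nat_def]]
      cont_at_ends_1[OF ends_attach_pendant_interval_graph(3)]
      cont_at_ends_1[OF ends_attach_pendant_interval_graph(4)]
      flux_ends_3[OF ends_attach_pendant_interval_graph(1)]
      flux_ends_1[OF ends_attach_pendant_interval_graph(2)[unfolded One_nat_def]]
      flux_ends_1[OF ends_attach_pendant_interval_graph(3)]
      flux_ends_1[OF ends_attach_pendant_interval_graph(4)]
      end_val_graph_sol end_der_graph_sol algebra_simps)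

lemma vval_attach_pendant_interval_graph:
  "gsol (attach_pendant (interval_graph L) 0 c) lam B u
     \<Longrightarrow> vval (attach_pendant (interval_graph L) 0 c) u 0 = u 1 0"
  by (simp add: vval_gsol[where p = "(1, False)"] ends_attach_pendant_interval_graph end_val_def)

section \<open>Boundary data of the loop and the interval\<close>

lemma mem_boundary_data_loop_graph:
  assumes L: "L > 0"
  shows "(p, f) \<in> boundary_data (loop_graph L) 0 k \<longleftrightarrow>
    (\<exists>b. p = edge_sol k p b L \<and> f = b - edge_sol k b (- k\<^sup>2 * p) L)"
proof
  note mem = mem_boundary_data_graph_sol[OF wf_graph_loop_graph[OF L], of 0, unfolded vertices_loop_graph, OF singletonI]
  {
    assume "(p, f) \<in> boundary_data (loop_graph L) 0 k"
    then obtain a b where sol: "gsol (loop_graph L) (k\<^sup>2) {0} (graph_sol k a b)"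
      and "p = vval (loop_graph L) (graph_sol k a b) 0" "f = flux (loop_graph L) (graph_sol k a b) 0"
      unfolding mem by blast
    with vval_loop_graph[OF sol] show "\<exists>b. p = edge_sol k p b L \<and> f = b - edge_sol k b (- k\<^sup>2 * p) L"
      by (intro exI[of _ "b 0"])
        (simp add: gsol_loop_graph_sol[OF L] flux_loop_graph_sol[OF L] graph_sol_def)
  }
  {
    assume "\<exists>b. p = edge_sol k p b L \<and> f = b - edge_sol k b (- k\<^sup>2 * p) L"
    then obtain b where "p = edge_sol k p b L" "f = b - edge_sol k b (- k\<^sup>2 * p) L"
      by blast
    moreover have sol: "gsol (loop_graph L) (k\<^sup>2) {0} (graph_sol k (\<lambda>_. p) (\<lambda>_. b))"
      using calculation by (simp add: gsol_loop_graph_sol[OF L])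
    ultimately show "(p, f) \<in> boundary_data (loop_graph L) 0 k"
      unfolding mem using vval_loop_graph[OF sol]
      by (intro exI[of _ "\<lambda>_. p"] exI[of _ "\<lambda>_. b"]) (simp add: flux_loop_graph_sol[OF L] graph_sol_def)
  }
qed

lemma boundary_data_loop_graph:
  assumes L: "L > 0"
  shows "boundary_data (loop_graph L) 0 k = {(p, f). cosk k (L / 2) * f = 2 * k\<^sup>2 * sink k (L / 2) * p}"
proof -
  define C S where "C = cosk k (L / 2)" and "S = sink k (L / 2)"
  have P: "C\<^sup>2 + k\<^sup>2 * S\<^sup>2 = 1" unfolding C_def S_def by (rule cosk_sink_pythagoras)
  have sol: "edge_sol k a b L = a * (C\<^sup>2 - k\<^sup>2 * S\<^sup>2) + b * (2 * S * C)" for a b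
    by (simp add: edge_sol_def C_def S_def flip: cosk_sink_halves)
  have "(p, f) \<in> boundary_data (loop_graph L) 0 k \<longleftrightarrow> C * f = 2 * k\<^sup>2 * S * p" for p f
  proof
    assume "(p, f) \<in> boundary_data (loop_graph L) 0 k"
    then obtain b where "p = edge_sol k p b L" "f = b - edge_sol k b (- k\<^sup>2 * p) L"
      unfolding mem_boundary_data_loop_graph[OF L] by blast
    then show "C * f = 2 * k\<^sup>2 * S * p" using P unfolding sol by algebra
  next
    assume line: "C * f = 2 * k\<^sup>2 * S * p"
    (* the solution symmetric about the point opposite v: each end of the loop carries half the flux *)
    define b where "b = f / 2"
    have "p = edge_sol k p b L" "f = b - edge_sol k b (- k\<^sup>2 * p) L"
      using line P unfolding sol b_def by algebra+
    then show "(p, f) \<in> boundary_data (loop_graph L) 0 k"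
      unfolding mem_boundary_data_loop_graph[OF L] by blast
  qed
  then show ?thesis unfolding C_def S_def by auto
qed

lemma mem_boundary_data_interval_graph:
  assumes L: "L > 0"
  shows "(p, f) \<in> boundary_data (interval_graph L) 0 k \<longleftrightarrow>
    (\<exists>a d. p = edge_sol k a 0 (L / 2) \<and> edge_sol k d (- k\<^sup>2 * p) (L / 2) = 0 \<and>
       f = d - edge_sol k 0 (- k\<^sup>2 * a) (L / 2))"
proof
  note mem = mem_boundary_data_graph_sol[OF wf_graph_interval_graph[OF L], of 0,
      unfolded vertices_interval_graph, OF insertI1]
  {
    assume "(p, f) \<in> boundary_data (interval_graph L) 0 k"
    then obtain a b where sol: "gsol (interval_graph L) (k\<^sup>2) {0} (graph_sol k a b)"
      and "p = vval (interval_graph L) (graph_sol k a b) 0" "f = flux (interval_graph L) (graph_sol k a b) 0"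
      unfolding mem by blast
    with vval_interval_graph[OF sol] show "\<exists>a d. p = edge_sol k a 0 (L / 2) \<and>
        edge_sol k d (- k\<^sup>2 * p) (L / 2) = 0 \<and> f = d - edge_sol k 0 (- k\<^sup>2 * a) (L / 2)"
      by (intro exI[of _ "a 0"] exI[of _ "b 1"])
        (auto simp: gsol_interval_graph_sol[OF L] flux_interval_graph_sol[OF L] graph_sol_def)
  }
  {
    assume "\<exists>a d. p = edge_sol k a 0 (L / 2) \<and> edge_sol k d (- k\<^sup>2 * p) (L / 2) = 0 \<and>
       f = d - edge_sol k 0 (- k\<^sup>2 * a) (L / 2)"
    then obtain a d where "p = edge_sol k a 0 (L / 2)" "edge_sol k d (- k\<^sup>2 * p) (L / 2) = 0"
      "f = d - edge_sol k 0 (- k\<^sup>2 * a) (L / 2)"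
      by blast
    moreover define a' b' where "a' e = (if e = 0 then a else p)" and "b' e = (if e = 0 then 0 else d)"
      for e :: nat
    moreover have sol: "gsol (interval_graph L) (k\<^sup>2) {0} (graph_sol k a' b')"
      using calculation by (simp add: gsol_interval_graph_sol[OF L])
    ultimately show "(p, f) \<in> boundary_data (interval_graph L) 0 k"
      unfolding mem using vval_interval_graph[OF sol]
      by (intro exI[of _ a'] exI[of _ b']) (simp add: flux_interval_graph_sol[OF L] graph_sol_def)
  }
qed

lemma boundary_data_interval_graph:
  assumes L: "L > 0"
  shows "boundary_data (interval_graph L) 0 k = {(p, f). cosk k (L / 2) * f = 2 * k\<^sup>2 * sink k (L / 2) * p}"
proof -
  define C S where "C = cosk k (L / 2)" and "S = sink k (L / 2)"
  have P: "C\<^sup>2 + k\<^sup>2 * S\<^sup>2 = 1" unfolding C_def S_def by (rule cosk_sink_pythagoras)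
  have sol: "edge_sol k a b (L / 2) = a * C + b * S" for a b
    by (simp add: edge_sol_def C_def S_def)
  have "(p, f) \<in> boundary_data (interval_graph L) 0 k \<longleftrightarrow> C * f = 2 * k\<^sup>2 * S * p" for p f
  proof
    assume "(p, f) \<in> boundary_data (interval_graph L) 0 k"
    then obtain a d where "p = edge_sol k a 0 (L / 2)" "edge_sol k d (- k\<^sup>2 * p) (L / 2) = 0"
      "f = d - edge_sol k 0 (- k\<^sup>2 * a) (L / 2)"
      unfolding mem_boundary_data_interval_graph[OF L] by blast
    then show "C * f = 2 * k\<^sup>2 * S * p" unfolding sol by algebra
  next
    assume line: "C * f = 2 * k\<^sup>2 * S * p"
    (* the solution symmetric about v: each half of the interval carries half the flux *)
    define b where "b = f / 2"
    have "p = edge_sol k (C * p + S * b) 0 (L / 2)" "edge_sol k b (- k\<^sup>2 * p) (L / 2) = 0"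
      "f = b - edge_sol k 0 (- k\<^sup>2 * (C * p + S * b)) (L / 2)"
      using line P unfolding sol b_def by algebra+
    then show "(p, f) \<in> boundary_data (interval_graph L) 0 k"
      unfolding mem_boundary_data_interval_graph[OF L] by blast
  qed
  then show ?thesis unfolding C_def S_def by auto
qed

lemma ex_nonzero_mult_eq_0_iff:
  fixes x :: "'a :: {ring_no_zero_divisors, zero_neq_one}"
  shows "(\<exists>p. p \<noteq> 0 \<and> p * x = 0) \<longleftrightarrow> x = 0"
proof
  show "x = 0 \<Longrightarrow> \<exists>p. p \<noteq> 0 \<and> p * x = 0" by (intro exI[of _ 1]) simp
qed auto

lemma M_rel_loop_graph:
  assumes L: "L > 0"
  shows "M_rel (loop_graph L) 0 k m \<longleftrightarrow> cosk k (L / 2) * m = 2 * k\<^sup>2 * sink k (L / 2)"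
proof -
  have "cosk k (L / 2) * (m * p) = 2 * k\<^sup>2 * sink k (L / 2) * p \<longleftrightarrow>
      p * (cosk k (L / 2) * m - 2 * k\<^sup>2 * sink k (L / 2)) = 0" for p
  proof -
    have "p * (cosk k (L / 2) * m - 2 * k\<^sup>2 * sink k (L / 2))
        = cosk k (L / 2) * (m * p) - 2 * k\<^sup>2 * sink k (L / 2) * p"
      by (simp add: algebra_simps)
    then show ?thesis by simp
  qed
  then have "M_rel (loop_graph L) 0 k m \<longleftrightarrow>
      (\<exists>p. p \<noteq> 0 \<and> p * (cosk k (L / 2) * m - 2 * k\<^sup>2 * sink k (L / 2)) = 0)"
    unfolding M_rel_iff_boundary_data boundary_data_loop_graph[OF L] by simp
  then show ?thesis unfolding ex_nonzero_mult_eq_0_iff by simp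
qed

lemma M_rel_loop_graph_eq_interval_graph:
  "L > 0 \<Longrightarrow> M_rel (loop_graph L) 0 k = M_rel (interval_graph L) 0 k"
  by (simp add: fun_eq_iff M_rel_iff_boundary_data boundary_data_loop_graph
      boundary_data_interval_graph)

lemma M_defined_loop_graph:
  assumes "L > 0" "cosk k (L / 2) \<noteq> 0"
  shows "M_defined (loop_graph L) 0 k"
  unfolding M_defined_def M_rel_loop_graph[OF assms(1)]
proof
  show "cosk k (L / 2) * (2 * k\<^sup>2 * sink k (L / 2) / cosk k (L / 2)) = 2 * k\<^sup>2 * sink k (L / 2)"
    using assms(2) by simp
qed (use assms(2) in \<open>simp add: field_simps\<close>)

lemma not_islimpt_cos_zeros: "\<not> z islimpt {k :: complex. cos (k * c) = 0}"
proof
  assume "z islimpt {k :: complex. cos (k * c) = 0}"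
  then have "cos (0 * c) = 0"
    by (intro analytic_continuation[of "\<lambda>k. cos (k * c)" UNIV "{k. cos (k * c) = 0}" z 0])
      (auto intro!: holomorphic_intros)
  then show False by simp
qed

lemma M_fun_loop_graph_eq_interval_graph:
  assumes L: "L > 0"
  shows "\<exists>S :: complex set. (\<forall>z. \<not> z islimpt S) \<and>
    (\<forall>k. k \<notin> S \<longrightarrow> M_defined (loop_graph L) 0 k \<and> M_defined (interval_graph L) 0 k \<and>
       M_fun (loop_graph L) 0 k = M_fun (interval_graph L) 0 k)"
proof (intro exI[of _ "{k. cosk k (L / 2) = 0}"] conjI allI impI)
  fix z show "\<not> z islimpt {k. cosk k (L / 2) = 0}"
    using not_islimpt_cos_zeros[of z "of_real (L / 2)"] unfolding cosk_def .
next
  fix k assume "k \<notin> {k. cosk k (L / 2) = 0}"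
  then have "M_defined (loop_graph L) 0 k" by (simp add: M_defined_loop_graph[OF L])
  then show "M_defined (loop_graph L) 0 k" "M_defined (interval_graph L) 0 k"
    "M_fun (loop_graph L) 0 k = M_fun (interval_graph L) 0 k"
    by (simp_all add: M_defined_def M_fun_def M_rel_loop_graph_eq_interval_graph[OF L])
qed

lemma not_is_eigenvalue_loop_graph:
  assumes L: "L > 0" and C: "cosk k (L / 2) = 0"
  shows "\<not> is_eigenvalue (loop_graph L) (k\<^sup>2)"
proof
  assume "is_eigenvalue (loop_graph L) (k\<^sup>2)"
  then obtain a b where sol: "gsol (loop_graph L) (k\<^sup>2) {} (graph_sol k a b)"
    and nz: "a 0 \<noteq> 0 \<or> b 0 \<noteq> 0"
    unfolding is_eigenvalue_graph_sol[OF wf_graph_loop_graph[OF L]] by auto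
  (* going once around the loop negates the Cauchy data *)
  have "cosk k L = -1" "sink k L = 0"
    using cosk_sink_halves[of k L] cosk_sink_pythagoras[of k "L / 2"] C by simp_all
  moreover have "a 0 = edge_sol k (a 0) (b 0) L" "b 0 = edge_sol k (b 0) (- k\<^sup>2 * a 0) L"
    using sol by (simp_all add: gsol_loop_graph_sol[OF L])
  ultimately have "a 0 = - a 0" "b 0 = - b 0" by (simp_all add: edge_sol_def)
  with nz show False by simp
qed

lemma is_eigenvalue_interval_graph:
  assumes L: "L > 0" and C: "cosk k (L / 2) = 0"
  shows "is_eigenvalue (interval_graph L) (k\<^sup>2)"
proof -
  (* u = cos kx on [0, L], which vanishes at the midpoint v *)
  define a b where "a e = (if e = 0 then 1 else 0 :: complex)"
    and "b e = (if e = 0 then 0 else - k\<^sup>2 * sink k (L / 2))" for e :: nat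
  have "gsol (interval_graph L) (k\<^sup>2) {} (graph_sol k a b)"
    using C by (simp add: gsol_interval_graph_sol[OF L] a_def b_def edge_sol_def)
  moreover have "a 0 \<noteq> 0" by (simp add: a_def)
  ultimately show ?thesis
    unfolding is_eigenvalue_graph_sol[OF wf_graph_interval_graph[OF L]] by auto
qed

lemma not_isospectral_loop_graph_interval_graph:
  assumes L: "L > 0"
  shows "\<not> isospectral (loop_graph L) (interval_graph L)"
proof -
  define k :: complex where "k = of_real (pi / L)"
  have "pi / L * (L / 2) = pi / 2" using L by simp
  then have "k * of_real (L / 2) = of_real (pi / 2)"
    unfolding k_def of_real_mult[symmetric] by simp
  then have "cosk k (L / 2) = 0" by (simp add: cosk_def flip: cos_of_real)
  then have "multiplicity (loop_graph L) (k\<^sup>2) = 0" "multiplicity (interval_graph L) (k\<^sup>2) \<noteq> 0"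
    using not_is_eigenvalue_loop_graph[OF L] is_eigenvalue_interval_graph[OF L]
    by (simp_all add: multiplicity_eq_0_iff)
  then show ?thesis unfolding isospectral_def by force
qed

section \<open>Attaching a pendant edge\<close>

lemma eigenfun_attach_pendant_loop_graph_iff:
  assumes L: "L > 0" and c: "c > 0"
  shows "(\<exists>u. eigenfun (attach_pendant (loop_graph L) 0 c) (k\<^sup>2) u
            \<and> vval (attach_pendant (loop_graph L) 0 c) u 0 \<noteq> 0)
    \<longleftrightarrow> (\<exists>(p, f)\<in>boundary_data (loop_graph L) 0 k.
          p \<noteq> 0 \<and> edge_sol k (- f) (- k\<^sup>2 * p) c = 0)"
  (is "?lhs \<longleftrightarrow> ?rhs")
proof
  let ?G = "attach_pendant (loop_graph L) 0 c"
  note eigen = ex_eigenfun_graph_sol[OF wf_graph_attach_pendant_loop_graph[OF L c] vertex_0_attach_pendant]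
  note sol_iff = gsol_attach_pendant_loop_graph_sol[OF L c]
  {
    assume ?lhs
    then obtain a b where sol: "gsol ?G (k\<^sup>2) {} (graph_sol k a b)"
      and nz: "vval ?G (graph_sol k a b) 0 \<noteq> 0"
      unfolding eigen by blast
    define f where "f = b 0 - edge_sol k (b 0) (- k\<^sup>2 * a 0) L"
    have "a 0 = edge_sol k (a 0) (b 0) L" "a 1 = a 0" "b 1 = - f" "edge_sol k (b 1) (- k\<^sup>2 * a 1) c = 0"
      using sol unfolding sol_iff f_def by (auto simp: add_eq_0_iff)
    moreover have "a 0 \<noteq> 0"
      using nz vval_attach_pendant_loop_graph[OF sol] by (simp add: graph_sol_def)
    ultimately have "(a 0, f) \<in> boundary_data (loop_graph L) 0 k"
      "a 0 \<noteq> 0 \<and> edge_sol k (- f) (- k\<^sup>2 * a 0) c = 0"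
      unfolding mem_boundary_data_loop_graph[OF L] f_def by auto
    then show ?rhs by (intro bexI[of _ "(a 0, f)"]) simp_all
  }
  {
    assume ?rhs
    then obtain p f where pf: "(p, f) \<in> boundary_data (loop_graph L) 0 k"
      and nz: "p \<noteq> 0" and tip: "edge_sol k (- f) (- k\<^sup>2 * p) c = 0"
      by auto
    from pf obtain b where "p = edge_sol k p b L" "f = b - edge_sol k b (- k\<^sup>2 * p) L"
      unfolding mem_boundary_data_loop_graph[OF L] by blast
    with tip have sol: "gsol ?G (k\<^sup>2) {} (graph_sol k (\<lambda>_. p) (\<lambda>e. if e = 0 then b else - f))"
      unfolding sol_iff by simp
    moreover have "vval ?G (graph_sol k (\<lambda>_. p) (\<lambda>e. if e = 0 then b else - f)) 0 \<noteq> 0"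
      using nz vval_attach_pendant_loop_graph[OF sol] by (simp add: graph_sol_def)
    ultimately show ?lhs unfolding eigen by blast
  }
qed

lemma eigenfun_attach_pendant_interval_graph_iff:
  assumes L: "L > 0" and c: "c > 0"
  shows "(\<exists>u. eigenfun (attach_pendant (interval_graph L) 0 c) (k\<^sup>2) u
            \<and> vval (attach_pendant (interval_graph L) 0 c) u 0 \<noteq> 0)
    \<longleftrightarrow> (\<exists>(p, f)\<in>boundary_data (interval_graph L) 0 k.
          p \<noteq> 0 \<and> edge_sol k (- f) (- k\<^sup>2 * p) c = 0)"
  (is "?lhs \<longleftrightarrow> ?rhs")
proof
  let ?G = "attach_pendant (interval_graph L) 0 c"
  note eigen = ex_eigenfun_graph_sol[OF wf_graph_attach_pendant_interval_graph[OF L c] vertex_0_attach_pendant]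
  note sol_iff = gsol_attach_pendant_interval_graph_sol[OF L c]
  {
    assume ?lhs
    then obtain a b where sol: "gsol ?G (k\<^sup>2) {} (graph_sol k a b)"
      and nz: "vval ?G (graph_sol k a b) 0 \<noteq> 0"
      unfolding eigen by blast
    define f where "f = b 1 - edge_sol k 0 (- k\<^sup>2 * a 0) (L / 2)"
    have "a 1 = edge_sol k (a 0) 0 (L / 2)" "edge_sol k (b 1) (- k\<^sup>2 * a 1) (L / 2) = 0"
      "a 2 = a 1" "b 2 = - f" "edge_sol k (b 2) (- k\<^sup>2 * a 2) c = 0"
      using sol unfolding sol_iff f_def by (auto simp: algebra_simps)
    moreover have "a 1 \<noteq> 0"
      using nz vval_attach_pendant_interval_graph[OF sol] by (simp add: graph_sol_def)
    ultimately have "(a 1, f) \<in> boundary_data (interval_graph L) 0 k"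
      "a 1 \<noteq> 0 \<and> edge_sol k (- f) (- k\<^sup>2 * a 1) c = 0"
      unfolding mem_boundary_data_interval_graph[OF L] f_def by auto
    then show ?rhs by (intro bexI[of _ "(a 1, f)"]) simp_all
  }
  {
    assume ?rhs
    then obtain p f where pf: "(p, f) \<in> boundary_data (interval_graph L) 0 k"
      and nz: "p \<noteq> 0" and tip: "edge_sol k (- f) (- k\<^sup>2 * p) c = 0"
      by auto
    from pf obtain a d where "p = edge_sol k a 0 (L / 2)" "edge_sol k d (- k\<^sup>2 * p) (L / 2) = 0"
      "f = d - edge_sol k 0 (- k\<^sup>2 * a) (L / 2)"
      unfolding mem_boundary_data_interval_graph[OF L] by blast
    with tip have sol: "gsol ?G (k\<^sup>2) {}
        (graph_sol k (\<lambda>e. if e = 0 then a else p) (\<lambda>e. if e = 0 then 0 else if e = 1 then d else - f))"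
      unfolding sol_iff by simp
    moreover have "vval ?G (graph_sol k (\<lambda>e. if e = 0 then a else p)
        (\<lambda>e. if e = 0 then 0 else if e = 1 then d else - f)) 0 \<noteq> 0"
      using nz vval_attach_pendant_interval_graph[OF sol] by (simp add: graph_sol_def)
    ultimately show ?lhs unfolding eigen by blast
  }
qed

lemma ex_eigenfun_attach_pendant_loop_graph_iff_interval_graph:
  assumes L: "L > 0" and c: "c > 0"
  shows "(\<exists>u. eigenfun (attach_pendant (loop_graph L) 0 c) lam u
            \<and> vval (attach_pendant (loop_graph L) 0 c) u 0 \<noteq> 0)
    \<longleftrightarrow> (\<exists>u. eigenfun (attach_pendant (interval_graph L) 0 c) lam u
            \<and> vval (attach_pendant (interval_graph L) 0 c) u 0 \<noteq> 0)"
proof -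
  obtain k where "lam = k\<^sup>2" using power2_csqrt by metis
  then show ?thesis
    by (simp add: eigenfun_attach_pendant_loop_graph_iff[OF L c]
        eigenfun_attach_pendant_interval_graph_iff[OF L c]
        boundary_data_loop_graph[OF L] boundary_data_interval_graph[OF L])
qed

(* Unknowns: u(v) and the outgoing derivatives at v along the loop and along the pendant edge. *)
lemma is_eigenvalue_attach_pendant_loop_graph_iff:
  assumes L: "L > 0" and c: "c > 0"
  shows "is_eigenvalue (attach_pendant (loop_graph L) 0 c) (k\<^sup>2) \<longleftrightarrow>
    (\<exists>x y z. (x, y, z) \<noteq> (0, 0, 0) \<and> edge_sol k x y L - x = 0 \<and>
       y - edge_sol k y (- k\<^sup>2 * x) L + z = 0 \<and> edge_sol k z (- k\<^sup>2 * x) c = 0)"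
  (is "?G \<longleftrightarrow> (\<exists>x y z. ?sys x y z)")
proof
  assume ?G
  then obtain a b where "gsol (attach_pendant (loop_graph L) 0 c) (k\<^sup>2) {} (graph_sol k a b)"
    "\<exists>e\<in>{0, 1}. a e \<noteq> 0 \<or> b e \<noteq> 0"
    unfolding is_eigenvalue_graph_sol[OF wf_graph_attach_pendant_loop_graph[OF L c]] by auto
  then have "?sys (a 0) (b 0) (b 1)"
    unfolding gsol_attach_pendant_loop_graph_sol[OF L c] by auto
  then show "\<exists>x y z. ?sys x y z" by blast
next
  assume "\<exists>x y z. ?sys x y z"
  then obtain x y z where "?sys x y z" by blast
  moreover define a b where "a = (\<lambda>_ :: nat. x)" and "b = (\<lambda>e :: nat. if e = 0 then y else z)"
  ultimately have "gsol (attach_pendant (loop_graph L) 0 c) (k\<^sup>2) {} (graph_sol k a b)"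
    "\<exists>e\<in>{0, 1}. a e \<noteq> 0 \<or> b e \<noteq> 0"
    unfolding gsol_attach_pendant_loop_graph_sol[OF L c] by auto
  then show ?G
    unfolding is_eigenvalue_graph_sol[OF wf_graph_attach_pendant_loop_graph[OF L c]] by auto
qed

(* Unknowns: u at the free end of the first half, and the outgoing derivatives at v along the
   second half and along the pendant edge. *)
lemma is_eigenvalue_attach_pendant_interval_graph_iff:
  assumes L: "L > 0" and c: "c > 0"
  shows "is_eigenvalue (attach_pendant (interval_graph L) 0 c) (k\<^sup>2) \<longleftrightarrow>
    (\<exists>x y z. (x, y, z) \<noteq> (0, 0, 0) \<and>
       edge_sol k y (- k\<^sup>2 * edge_sol k x 0 (L / 2)) (L / 2) = 0 \<and>
       y + z - edge_sol k 0 (- k\<^sup>2 * x) (L / 2) = 0 \<and>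
       edge_sol k z (- k\<^sup>2 * edge_sol k x 0 (L / 2)) c = 0)"
  (is "?G \<longleftrightarrow> (\<exists>x y z. ?sys x y z)")
proof
  assume ?G
  then obtain a b where "gsol (attach_pendant (interval_graph L) 0 c) (k\<^sup>2) {} (graph_sol k a b)"
    "\<exists>e\<in>{0, 1, 2}. a e \<noteq> 0 \<or> b e \<noteq> 0"
    unfolding is_eigenvalue_graph_sol[OF wf_graph_attach_pendant_interval_graph[OF L c]] by auto
  then have "?sys (a 0) (b 1) (b 2)"
    unfolding gsol_attach_pendant_interval_graph_sol[OF L c] by auto
  then show "\<exists>x y z. ?sys x y z" by blast
next
  assume "\<exists>x y z. ?sys x y z"
  then obtain x y z where "?sys x y z" by blast
  moreover define a b where "a = (\<lambda>e :: nat. if e = 0 then x else edge_sol k x 0 (L / 2))"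
    and "b = (\<lambda>e :: nat. if e = 0 then 0 else if e = 1 then y else z)"
  ultimately have "gsol (attach_pendant (interval_graph L) 0 c) (k\<^sup>2) {} (graph_sol k a b)"
    "\<exists>e\<in>{0, 1, 2}. a e \<noteq> 0 \<or> b e \<noteq> 0"
    unfolding gsol_attach_pendant_interval_graph_sol[OF L c] by auto
  then show ?G
    unfolding is_eigenvalue_graph_sol[OF wf_graph_attach_pendant_interval_graph[OF L c]] by auto
qed

section \<open>Secular equations for L = 4\<close>

lemma det_eq_0_iff_nontrivial_kernel:
  fixes A :: "'a::field^'n^'n"
  shows "det A = 0 \<longleftrightarrow> (\<exists>x. x \<noteq> 0 \<and> A *v x = 0)"
proof -
  have "det A \<noteq> 0 \<longleftrightarrow> (\<forall>x. A *v x = 0 \<longrightarrow> x = 0)"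
    by (simp only: invertible_det_nz[symmetric] invertible_left_inverse matrix_left_invertible_ker)
  then show ?thesis by blast
qed

lemma homogeneous_3x3_nontrivial_iff:
  fixes a11 a12 a13 a21 a22 a23 a31 a32 a33 :: "'a::field"
  shows "(\<exists>x y z. (x, y, z) \<noteq> (0, 0, 0) \<and> a11 * x + a12 * y + a13 * z = 0
             \<and> a21 * x + a22 * y + a23 * z = 0 \<and> a31 * x + a32 * y + a33 * z = 0)
    \<longleftrightarrow> a11 * (a22 * a33 - a23 * a32) - a12 * (a21 * a33 - a23 * a31)
          + a13 * (a21 * a32 - a22 * a31) = 0"
proof -
  define A :: "'a^3^3" where
    "A = vector [vector [a11, a12, a13], vector [a21, a22, a23], vector [a31, a32, a33]]"
  have mult: "A *v vector [x, y, z] = vector [a11 * x + a12 * y + a13 * z,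
      a21 * x + a22 * y + a23 * z, a31 * x + a32 * y + a33 * z]" for x y z
    by (simp add: A_def vec_eq_iff forall_3 matrix_vector_mult_def sum_3)
  have "det A = a11 * (a22 * a33 - a23 * a32) - a12 * (a21 * a33 - a23 * a31)
          + a13 * (a21 * a32 - a22 * a31)"
    by (simp add: A_def det_3 algebra_simps)
  moreover have "(\<exists>v. v \<noteq> 0 \<and> A *v v = 0) \<longleftrightarrow>
      (\<exists>x y z. vector [x, y, z] \<noteq> (0::'a^3) \<and> A *v vector [x, y, z] = 0)"
  proof -
    have "v = vector [v $ 1, v $ 2, v $ 3]" for v :: "'a^3"
      by (simp add: vec_eq_iff forall_3)
    then show ?thesis by metis
  qed
  ultimately show ?thesis using det_eq_0_iff_nontrivial_kernel[of A]
    by (simp add: mult vec_eq_iff forall_3)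
qed

lemma exp_i_multiples:
  fixes k :: complex
  shows "exp (2 * \<i> * k) = exp (\<i> * k) ^ 2" "exp (4 * \<i> * k) = exp (\<i> * k) ^ 4"
    "exp (\<i> * (k * 2)) = exp (\<i> * k) ^ 2" "exp (- (\<i> * (k * 2))) = 1 / exp (\<i> * k) ^ 2"
  using exp_of_nat_mult[of 2 "\<i> * k"] exp_of_nat_mult[of 4 "\<i> * k"]
  by (simp_all add: exp_minus field_simps mult.commute mult.left_commute)

lemma F_sec_factorization:
  "F_sec c k = 4 * \<i> * k * exp (2 * \<i> * k) * exp (\<i> * k * c)
     * (2 * sink k 2 * cosk k c + cosk k 2 * sink k c)"
proof (cases "k = 0")
  case True
  then show ?thesis by (simp add: F_sec_def)
next
  case False
  define X where "X = exp (\<i> * k)"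
  define W where "W = exp (\<i> * k * c)"
  have X0: "X \<noteq> 0" and W0: "W \<noteq> 0" by (auto simp: X_def W_def)
  note e = exp_i_multiples[of k, folded X_def]
  have ec: "exp (\<i> * (k * c)) = W" "exp (- (\<i> * (k * c))) = 1 / W"
    unfolding W_def by (simp_all add: exp_minus field_simps mult.commute mult.left_commute)
  have e2c: "exp (2 * \<i> * c * k) = W\<^sup>2"
    unfolding W_def using exp_of_nat_mult[of 2 "\<i> * k * c"]
    by (simp add: mult.commute mult.left_commute)
  have e2c2: "exp (2 * \<i> * (c + 2) * k) = W\<^sup>2 * X ^ 4"
  proof -
    have "2 * \<i> * (c + 2) * k = 2 * (\<i> * k * c) + 4 * (\<i> * k)" by (simp add: algebra_simps)
    then show ?thesis unfolding W_def X_def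
      using exp_of_nat_mult[of 2 "\<i> * k * c"] exp_of_nat_mult[of 4 "\<i> * k"]
      by (simp add: exp_add)
  qed
  have "F_sec c k = 3 * (W\<^sup>2 * X ^ 4) + X ^ 4 - 3 - W\<^sup>2"
    unfolding F_sec_def e2c e2c2 e(2) by simp
  moreover have "4 * \<i> * k * exp (2 * \<i> * k) * exp (\<i> * k * c)
      * (2 * sink k 2 * cosk k c + cosk k 2 * sink k c) = 3 * (W\<^sup>2 * X ^ 4) + X ^ 4 - 3 - W\<^sup>2"
    unfolding sink_def cosk_def using False X0 W0
    by (simp add: cos_exp_eq sin_exp_eq e ec W_def[symmetric] field_simps)
      (simp add: algebra_simps power2_eq_square power4_eq_xxxx)
  ultimately show ?thesis by simp
qed

lemma exp_4ik_diff_1: "exp (4 * \<i> * k) - 1 = 2 * \<i> * k * exp (2 * \<i> * k) * sink k 2"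
proof (cases "k = 0")
  case False
  define X where "X = exp (\<i> * k)"
  have "X \<noteq> 0" by (simp add: X_def)
  with False show ?thesis
    unfolding sink_def exp_i_multiples[of k, folded X_def]
    by (simp add: sin_exp_eq exp_i_multiples[of k, folded X_def] field_simps power4_eq_xxxx power2_eq_square)
qed simp

lemma exp_4ik_add_1: "exp (4 * \<i> * k) + 1 = 2 * exp (2 * \<i> * k) * cosk k 2"
proof -
  define X where "X = exp (\<i> * k)"
  have "X \<noteq> 0" by (simp add: X_def)
  then show ?thesis
    unfolding cosk_def exp_i_multiples[of k, folded X_def]
    by (simp add: cos_exp_eq exp_i_multiples[of k, folded X_def] field_simps power4_eq_xxxx power2_eq_square)
qed

lemma secular_factor_loop:
  "(- 1 + exp (4 * \<i> * k)) * F_sec c k = 0 \<longleftrightarrow>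
     k\<^sup>2 * sink k 2 * (2 * sink k 2 * cosk k c + cosk k 2 * sink k c) = 0"
proof -
  have "(- 1 + exp (4 * \<i> * k)) * F_sec c k = - 8 * (exp (2 * \<i> * k))\<^sup>2 * exp (\<i> * k * c)
      * (k\<^sup>2 * sink k 2 * (2 * sink k 2 * cosk k c + cosk k 2 * sink k c))"
    using exp_4ik_diff_1[of k] unfolding F_sec_factorization[of c k]
    by (simp add: algebra_simps power2_eq_square)
  then show ?thesis by simp
qed

lemma secular_factor_interval:
  "(1 + exp (4 * \<i> * k)) * F_sec c k = 0 \<longleftrightarrow>
     k\<^sup>2 * cosk k 2 * (2 * sink k 2 * cosk k c + cosk k 2 * sink k c) = 0"
proof -
  have "(1 + exp (4 * \<i> * k)) * F_sec c k = 8 * \<i> * (exp (2 * \<i> * k))\<^sup>2 * exp (\<i> * k * c)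
      * (k * cosk k 2 * (2 * sink k 2 * cosk k c + cosk k 2 * sink k c))"
    using exp_4ik_add_1[of k] unfolding F_sec_factorization[of c k]
    by (simp add: algebra_simps power2_eq_square)
  then show ?thesis by (simp add: power2_eq_square)
qed

lemma is_eigenvalue_attach_pendant_loop_graph_4_iff:
  assumes c: "c > 0"
  shows "is_eigenvalue (attach_pendant (loop_graph 4) 0 c) (k\<^sup>2)
    \<longleftrightarrow> (- 1 + exp (4 * \<i> * k)) * F_sec c k = 0"
proof -
  define C S Cc Sc where "C = cosk k 2" and "S = sink k 2" and "Cc = cosk k c" and "Sc = sink k c"
  have C4: "cosk k 4 = C\<^sup>2 - k\<^sup>2 * S\<^sup>2" "sink k 4 = 2 * S * C"
    using cosk_sink_halves[of k 4] by (simp_all add: C_def S_def)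
  have P: "C\<^sup>2 + k\<^sup>2 * S\<^sup>2 = 1" unfolding C_def S_def by (rule cosk_sink_pythagoras)
  have "is_eigenvalue (attach_pendant (loop_graph 4) 0 c) (k\<^sup>2) \<longleftrightarrow>
    (\<exists>x y z. (x, y, z) \<noteq> (0, 0, 0) \<and> (cosk k 4 - 1) * x + sink k 4 * y + 0 * z = 0
       \<and> k\<^sup>2 * sink k 4 * x + (1 - cosk k 4) * y + 1 * z = 0
       \<and> - k\<^sup>2 * Sc * x + 0 * y + Cc * z = 0)"
    unfolding is_eigenvalue_attach_pendant_loop_graph_iff[OF zero_less_numeral c]
    by (simp add: edge_sol_def Cc_def Sc_def algebra_simps)
  also have "\<dots> \<longleftrightarrow> (cosk k 4 - 1) * ((1 - cosk k 4) * Cc - 1 * 0)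
      - sink k 4 * (k\<^sup>2 * sink k 4 * Cc - 1 * (- k\<^sup>2 * Sc))
      + 0 * (k\<^sup>2 * sink k 4 * 0 - (1 - cosk k 4) * (- k\<^sup>2 * Sc)) = 0"
    by (rule homogeneous_3x3_nontrivial_iff)
  also have "\<dots> \<longleftrightarrow> - 2 * (k\<^sup>2 * S * (2 * S * Cc + C * Sc)) = 0"
    unfolding C4 using P by algebra
  finally show ?thesis
    unfolding secular_factor_loop C_def S_def Cc_def Sc_def by simp
qed

lemma is_eigenvalue_attach_pendant_interval_graph_4_iff:
  assumes c: "c > 0"
  shows "is_eigenvalue (attach_pendant (interval_graph 4) 0 c) (k\<^sup>2)
    \<longleftrightarrow> (1 + exp (4 * \<i> * k)) * F_sec c k = 0"
proof -
  define C S Cc Sc where "C = cosk k 2" and "S = sink k 2" and "Cc = cosk k c" and "Sc = sink k c"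
  have "is_eigenvalue (attach_pendant (interval_graph 4) 0 c) (k\<^sup>2) \<longleftrightarrow>
    (\<exists>x y z. (x, y, z) \<noteq> (0, 0, 0) \<and> - k\<^sup>2 * C * S * x + C * y + 0 * z = 0
       \<and> k\<^sup>2 * S * x + 1 * y + 1 * z = 0
       \<and> - k\<^sup>2 * C * Sc * x + 0 * y + Cc * z = 0)"
    unfolding is_eigenvalue_attach_pendant_interval_graph_iff[OF zero_less_numeral c]
    by (simp add: edge_sol_def C_def S_def Cc_def Sc_def algebra_simps)
  also have "\<dots> \<longleftrightarrow> - k\<^sup>2 * C * S * (1 * Cc - 1 * 0) - C * (k\<^sup>2 * S * Cc - 1 * (- k\<^sup>2 * C * Sc))
      + 0 * (k\<^sup>2 * S * 0 - 1 * (- k\<^sup>2 * C * Sc)) = 0"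
    by (rule homogeneous_3x3_nontrivial_iff)
  also have "\<dots> \<longleftrightarrow> - (k\<^sup>2 * C * (2 * S * Cc + C * Sc)) = 0"
    by (simp add: algebra_simps)
  finally show ?thesis
    unfolding secular_factor_interval C_def S_def Cc_def Sc_def by simp
qed

theorem mainTheorem8:
  fixes L :: real
  assumes "L > 0"
  shows "(\<exists>S :: complex set. (\<forall>z. \<not> z islimpt S) \<and>
           (\<forall>k. k \<notin> S \<longrightarrow> M_defined (loop_graph L) 0 k \<and> M_defined (interval_graph L) 0 k \<and>
                M_fun (loop_graph L) 0 k = M_fun (interval_graph L) 0 k))
    \<and> \<not> isospectral (loop_graph L) (interval_graph L)
    \<and> (\<forall>c>0. \<forall>lam.
         (\<exists>u. eigenfun (attach_pendant (loop_graph L) 0 c) lam u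
              \<and> vval (attach_pendant (loop_graph L) 0 c) u 0 \<noteq> 0)
       \<longleftrightarrow> (\<exists>u. eigenfun (attach_pendant (interval_graph L) 0 c) lam u
              \<and> vval (attach_pendant (interval_graph L) 0 c) u 0 \<noteq> 0))
    \<and> (\<forall>c>0. \<forall>k::complex.
         (is_eigenvalue (attach_pendant (loop_graph 4) 0 c) (k\<^sup>2)
            \<longleftrightarrow> (-1 + exp (4 * \<i> * k)) * F_sec c k = 0)
       \<and> (is_eigenvalue (attach_pendant (interval_graph 4) 0 c) (k\<^sup>2)
            \<longleftrightarrow> (1 + exp (4 * \<i> * k)) * F_sec c k = 0))"
  using M_fun_loop_graph_eq_interval_graph[OF assms] not_isospectral_loop_graph_interval_graph[OF assms]
    ex_eigenfun_attach_pendant_loop_graph_iff_interval_graph[OF assms]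
    is_eigenvalue_attach_pendant_loop_graph_4_iff is_eigenvalue_attach_pendant_interval_graph_4_iff
  by blast

end
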